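(* Let $a_0,\ldots,a_4$ be elements of an algebraically closed field of characteristic $0$ with $a_0a_1a_2a_3a_4\neq 0$. Then the singular points of $S^{(a_0,\ldots,a_4)}$ are exactly the points of the form $$\Big(\tfrac{1}{\sqrt{a_0}} : (-1)^{i_1}\tfrac{1}{\sqrt{a_1}} : (-1)^{i_2}\tfrac{1}{\sqrt{a_2}} : (-1)^{i_3}\tfrac{1}{\sqrt{a_3}} : (-1)^{i_4}\tfrac{1}{\sqrt{a_4}}\Big),\qquad i_1,\ldots,i_4\in\{0,1\},$$ (for fixed choices of the square roots) which lie on the hyperplane $X_0+X_1+X_2+X_3+X_4=0$.
   Context: For coefficients $a_0,\ldots,a_4$ (not all zero), $S^{(a_0,\ldots,a_4)}$ denotes the cubic surface in $\mathbf{P}^4$ (with coordinates $X_0,\ldots,X_4$) defined by the system $a_0X_0^3+a_1X_1^3+a_2X_2^3+a_3X_3^3+a_4X_4^3=0$, $X_0+X_1+X_2+X_3+X_4=0$. *)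

theory Defs
  imports "HOL-Computational_Algebra.Polynomial"
begin

text \<open>Points of P^4 are represented by nonzero coordinate vectors x :: nat => 'a,
  using only the coordinates x 0, ..., x 4.\<close>

definition nonzero_vec :: "(nat \<Rightarrow> 'a::field) \<Rightarrow> bool" where
  "nonzero_vec x \<longleftrightarrow> (\<exists>i<5. x i \<noteq> 0)"

definition proj_eq :: "(nat \<Rightarrow> 'a::field) \<Rightarrow> (nat \<Rightarrow> 'a) \<Rightarrow> bool" where
  "proj_eq x y \<longleftrightarrow> (\<exists>c. c \<noteq> 0 \<and> (\<forall>i<5. x i = c * y i))"

definition cubicF :: "(nat \<Rightarrow> 'a::field) \<Rightarrow> (nat \<Rightarrow> 'a) \<Rightarrow> 'a" where
  "cubicF a x = (\<Sum>i<5. a i * x i ^ 3)"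

definition linL :: "(nat \<Rightarrow> 'a::field) \<Rightarrow> 'a" where
  "linL x = (\<Sum>i<5. x i)"

definition gradF :: "(nat \<Rightarrow> 'a::field) \<Rightarrow> (nat \<Rightarrow> 'a) \<Rightarrow> nat \<Rightarrow> 'a" where
  "gradF a x i = 3 * a i * x i ^ 2"

definition gradL :: "(nat \<Rightarrow> 'a::field) \<Rightarrow> nat \<Rightarrow> 'a" where
  "gradL x i = 1"

text \<open>x (nonzero) represents a singular point of S^(a): it lies on S and the
  Jacobian matrix of (F, L) at x has rank < 2, i.e. its two rows are linearly dependent.\<close>
definition singular_point :: "(nat \<Rightarrow> 'a::field) \<Rightarrow> (nat \<Rightarrow> 'a) \<Rightarrow> bool" where
  "singular_point a x \<longleftrightarrow> nonzero_vec x \<and> cubicF a x = 0 \<and> linL x = 0 \<and>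
     (\<exists>\<mu> \<nu>. (\<mu> \<noteq> 0 \<or> \<nu> \<noteq> 0) \<and> (\<forall>i<5. \<mu> * gradF a x i + \<nu> * gradL x i = 0))"

text \<open>The candidate point (1/r_0 : (-1)^e_1/r_1 : ... : (-1)^e_4/r_4), r_i a square root of a_i.\<close>
definition cand_point :: "(nat \<Rightarrow> 'a::field) \<Rightarrow> (nat \<Rightarrow> nat) \<Rightarrow> nat \<Rightarrow> 'a" where
  "cand_point r e i = (if i = 0 then 1 / r 0 else (-1) ^ e i / r i)"

end

theory Submission
  imports Defs
begin

text \<open>By the Lagrange condition a point x of S is singular iff the values a_i x_i^2 agree
  (and are then nonzero); on the hyperplane X_0 + ... + X_4 = 0 this already forces F(x) = 0,
  since then F(x) = k (x_0 + ... + x_4). Taking a square root s of the common value k gives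
  x_i = \<plusminus>s / r_i, and normalising the sign of x_0 exhibits x as a multiple of a candidate point.\<close>

lemma linL_scaled:
  assumes "\<forall>i<5. x i = c * y i"
  shows "linL x = c * linL y"
  unfolding linL_def sum_distrib_left using assms by (intro sum.cong) auto

lemma singular_point_iff_weighted_squares_const:
  fixes a x :: "nat \<Rightarrow> 'a::field_char_0"
  assumes a_nz: "\<forall>i<5. a i \<noteq> 0"
  shows "singular_point a x \<longleftrightarrow>
           nonzero_vec x \<and> linL x = 0 \<and> (\<exists>k. k \<noteq> 0 \<and> (\<forall>i<5. a i * x i ^ 2 = k))"
proof
  assume "singular_point a x"
  then obtain \<mu> \<nu> where nz: "nonzero_vec x" and L: "linL x = 0" and \<mu>\<nu>: "\<mu> \<noteq> 0 \<or> \<nu> \<noteq> 0"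
    and grad: "\<And>i. i < 5 \<Longrightarrow> \<mu> * (3 * a i * x i ^ 2) + \<nu> = 0"
    unfolding singular_point_def gradF_def gradL_def by auto
  have "\<mu> \<noteq> 0" using grad[of 0] \<mu>\<nu> by auto
  define k where "k = - \<nu> / (3 * \<mu>)"
  have const: "a i * x i ^ 2 = k" if "i < 5" for i
    using grad[OF that] \<open>\<mu> \<noteq> 0\<close> unfolding k_def
    by (simp add: field_simps eq_neg_iff_add_eq_0 add.commute)
  obtain j where "j < 5" "x j \<noteq> 0" using nz unfolding nonzero_vec_def by blast
  then have "k \<noteq> 0" using const[of j] a_nz by auto
  with nz L const show "nonzero_vec x \<and> linL x = 0 \<and> (\<exists>k. k \<noteq> 0 \<and> (\<forall>i<5. a i * x i ^ 2 = k))"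
    by blast
next
  assume "nonzero_vec x \<and> linL x = 0 \<and> (\<exists>k. k \<noteq> 0 \<and> (\<forall>i<5. a i * x i ^ 2 = k))"
  then obtain k where nz: "nonzero_vec x" and L: "linL x = 0"
    and const: "\<forall>i<5. a i * x i ^ 2 = k" by blast
  have "\<forall>i<5. a i * x i ^ 3 = k * x i"
    using const by (metis mult.assoc power2_eq_square power3_eq_cube)
  then have "cubicF a x = k * linL x"
    unfolding cubicF_def linL_def sum_distrib_left by (intro sum.cong) auto
  then have "cubicF a x = 0" using L by simp
  moreover have "\<forall>i<5. 1 * gradF a x i + (- 3 * k) * gradL x i = 0"
    using const by (simp add: gradF_def gradL_def mult.assoc)
  ultimately show "singular_point a x"
    unfolding singular_point_def using nz L by (metis one_neq_zero)
qed

lemma weighted_square_cand_point: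
  fixes r :: "nat \<Rightarrow> 'a::field"
  assumes "r i \<noteq> 0" "r i ^ 2 = a i"
  shows "a i * cand_point r e i ^ 2 = 1"
proof -
  have "((-1::'a) ^ e i) ^ 2 = 1" by (simp add: power_even_eq flip: power_mult)
  then show ?thesis using assms by (auto simp: cand_point_def power_divide field_simps)
qed

lemma scaled_cand_point_if_weighted_squares_const:
  fixes a r x :: "nat \<Rightarrow> 'a::alg_closed_field"
  assumes r_nz: "\<forall>i<5. r i \<noteq> 0" and r_sq: "\<forall>i<5. r i ^ 2 = a i"
    and k_nz: "k \<noteq> 0" and const: "\<forall>i<5. a i * x i ^ 2 = k"
  obtains t e where "t \<noteq> 0" "\<forall>i. e i \<in> {0, 1}" "\<forall>i<5. x i = t * cand_point r e i"
proof -
  obtain s where s: "s ^ 2 = k" using nth_root_exists[of 2 k] by auto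
  have x_pm: "x i = s / r i \<or> x i = - (s / r i)" if "i < 5" for i
  proof -
    have "r i ^ 2 * x i ^ 2 = s ^ 2" using const r_sq s that by simp
    then have "x i ^ 2 = (s / r i) ^ 2" using r_nz that by (simp add: power_divide field_simps)
    then show ?thesis by (simp add: power2_eq_iff)
  qed
  define t where "t = (if x 0 = s / r 0 then s else - s)"
  define e where "e = (\<lambda>i. if x i = t / r i then 0 else (1::nat))"
  have "t \<noteq> 0" using s k_nz by (auto simp: t_def)
  moreover have "\<forall>i. e i \<in> {0, 1}" by (simp add: e_def)
  moreover have "x 0 = t / r 0" using x_pm[of 0] by (auto simp: t_def)
  then have "\<forall>i<5. x i = t * cand_point r e i"
    using x_pm by (auto simp: t_def e_def cand_point_def)
  ultimately show ?thesis using that by blast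
qed

theorem mainTheorem2:
  fixes a r :: "nat \<Rightarrow> 'a::{alg_closed_field, field_char_0}"
  assumes "(\<Prod>i<5. a i) \<noteq> 0"
    and "\<forall>i<5. r i ^ 2 = a i"
  shows "\<forall>x. nonzero_vec x \<longrightarrow>
           (singular_point a x \<longleftrightarrow>
            (\<exists>e. (\<forall>i\<in>{1..4}. e i \<in> {0, 1}) \<and> linL (cand_point r e) = 0 \<and>
                 proj_eq x (cand_point r e)))"
proof (intro allI impI iffI)
  have a_nz: "\<forall>i<5. a i \<noteq> 0" using assms(1) by auto
  have r_nz: "\<forall>i<5. r i \<noteq> 0" using a_nz assms(2) by fastforce
  fix x :: "nat \<Rightarrow> 'a"
  assume nz: "nonzero_vec x"
  {
    assume "singular_point a x"
    then obtain k where L: "linL x = 0" and "k \<noteq> 0" and "\<forall>i<5. a i * x i ^ 2 = k"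
      using singular_point_iff_weighted_squares_const[OF a_nz] by blast
    then obtain t e where "t \<noteq> 0" "\<forall>i. e i \<in> {0, 1}" and x_eq: "\<forall>i<5. x i = t * cand_point r e i"
      using scaled_cand_point_if_weighted_squares_const[OF r_nz assms(2)] by blast
    moreover have "linL (cand_point r e) = 0" using linL_scaled[OF x_eq] L \<open>t \<noteq> 0\<close> by simp
    ultimately show "\<exists>e. (\<forall>i\<in>{1..4}. e i \<in> {0, 1}) \<and> linL (cand_point r e) = 0 \<and>
                 proj_eq x (cand_point r e)" unfolding proj_eq_def by blast
  next
    assume "\<exists>e. (\<forall>i\<in>{1..4}. e i \<in> {0, 1}) \<and> linL (cand_point r e) = 0 \<and>
                 proj_eq x (cand_point r e)"
    then obtain e c where L: "linL (cand_point r e) = 0" and "c \<noteq> 0"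
      and x_eq: "\<forall>i<5. x i = c * cand_point r e i" unfolding proj_eq_def by blast
    have "\<forall>i<5. a i * x i ^ 2 = c ^ 2"
    proof (intro allI impI)
      fix i :: nat assume "i < 5"
      then have "a i * x i ^ 2 = c ^ 2 * (a i * cand_point r e i ^ 2)"
        using x_eq by (simp add: power_mult_distrib)
      also have "\<dots> = c ^ 2"
        using weighted_square_cand_point[of r i a e] r_nz assms(2) \<open>i < 5\<close> by simp
      finally show "a i * x i ^ 2 = c ^ 2" .
    qed
    moreover have "c ^ 2 \<noteq> 0" using \<open>c \<noteq> 0\<close> by simp
    moreover have "linL x = 0" using linL_scaled[OF x_eq] L by simp
    ultimately show "singular_point a x"
      unfolding singular_point_iff_weighted_squares_const[OF a_nz] using nz by blast
  }
qed

end
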